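(* Let $n\ge1$, $m \ge 1$ be integers and $\lambda > 1$, $\sigma > 1$ real numbers, and let $a_\alpha$, $a$, $b$ be as in the context. There is a constant $C > 0$ depending only on $n, m, \lambda, \sigma$ such that for every solution $u$ of the inequality $\sum_{|\alpha| = m} (-1)^m \partial^\alpha a_\alpha(x, u) \ge b(x) |u|^\lambda$ in $\mathbb{R}^n$ the following holds: if $0 < r_1 < r_2$ are real numbers with $r_2 \le \sqrt{\sigma}\, r_1$, $2J(r_1) \le J(r_2)$ and $J(r_1) > 0$, then $$J^{(1/\lambda - 1)/m}(r_1) - J^{(1/\lambda - 1)/m}(r_2) \ge C \int_{r_1}^{r_2} r^{(1/\lambda - 1) n/m} h^{1/(\lambda m)}(r)\, dr,$$ where $J$ and $h$ are defined in the context.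
   Context: For each multi-index $\alpha$ with $|\alpha| = m$, $a_\alpha : \mathbb{R}^n \times \mathbb{R} \to \mathbb{R}$ is a given function and $\partial^\alpha = \partial^{|\alpha|}/\partial x_1^{\alpha_1}\cdots\partial x_n^{\alpha_n}$. The function $b : \mathbb{R}^n \to (0,\infty)$ is positive measurable, and $a : \mathbb{R}^n \to (0,\infty)$ is positive measurable with $|a_\alpha(x,\zeta)| \le a(x)|\zeta|$ for almost all $x$, all $\zeta \in \mathbb{R}$, all $|\alpha|=m$. $B_r$ is the open ball of radius $r$ centered at $0$ in $\mathbb{R}^n$. A solution is a function $u$ with $b|u|^\lambda \in L_{1,loc}(\mathbb{R}^n)$, $a_\alpha(x,u) \in L_{1,loc}(\mathbb{R}^n)$ for all $|\alpha|=m$, and $\int_{\mathbb{R}^n} \sum_{|\alpha|=m} a_\alpha(x,u)\partial^\alpha\varphi\,dx \ge \int_{\mathbb{R}^n} b|u|^\lambda \varphi\,dx$ for all non-negative $\varphi \in C_0^\infty(\mathbb{R}^n)$. For $r>0$: $J(r) = \int_{B_r} b(x)|u|^\lambda\,dx$ and $$h(r) = \left( \frac{1}{r^n} \int_{B_{\sqrt{\sigma} r} \setminus B_{r/\sqrt{\sigma}}} a^{\lambda/(\lambda-1)}(x) b^{-1/(\lambda-1)}(x)\,dx \right)^{1-\lambda},$$ with $h(r) = 0$ if the integral equals $\infty$. *)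

theory Defs
  imports "HOL-Analysis.Analysis"
begin

text \<open>Points of R^n are vectors of type real^'n, n = CARD('n).
  Multi-indices are functions 'n => nat; |alpha| = sum alpha UNIV.\<close>

definition mindices :: "nat \<Rightarrow> ('n::finite \<Rightarrow> nat) set" where
  "mindices m = {\<alpha>. sum \<alpha> UNIV = m}"

definition dpartial :: "'n::finite \<Rightarrow> (real^'n \<Rightarrow> real) \<Rightarrow> real^'n \<Rightarrow> real" where
  "dpartial i f x = deriv (\<lambda>t. f (x + t *\<^sub>R axis i 1)) 0"

definition iter_partial :: "'n::finite list \<Rightarrow> (real^'n \<Rightarrow> real) \<Rightarrow> real^'n \<Rightarrow> real" where
  "iter_partial ds f = foldr dpartial ds f"

definition test_fun :: "(real^'n::finite \<Rightarrow> real) \<Rightarrow> bool" where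
  "test_fun \<phi> \<longleftrightarrow>
     (\<forall>ds. continuous_on UNIV (iter_partial ds \<phi>) \<and>
        (\<forall>x i. (\<lambda>t. iter_partial ds \<phi> (x + t *\<^sub>R axis i 1)) differentiable (at 0)))
     \<and> bounded {x. \<phi> x \<noteq> 0}"

text \<open>partial^alpha: differentiate alpha i times in direction i (order is
  irrelevant for smooth functions).\<close>
definition mpartial :: "('n::finite \<Rightarrow> nat) \<Rightarrow> (real^'n \<Rightarrow> real) \<Rightarrow> real^'n \<Rightarrow> real" where
  "mpartial \<alpha> f = iter_partial (SOME ds. \<forall>i. count (mset ds) i = \<alpha> i) f"

definition loc_integrable :: "(real^'n::finite \<Rightarrow> real) \<Rightarrow> bool" where
  "loc_integrable f \<longleftrightarrow> (\<forall>K. compact K \<longrightarrow> set_integrable lebesgue K f)"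

definition is_solution ::
  "nat \<Rightarrow> real \<Rightarrow> (('n::finite \<Rightarrow> nat) \<Rightarrow> real^'n \<Rightarrow> real \<Rightarrow> real) \<Rightarrow> (real^'n \<Rightarrow> real)
     \<Rightarrow> (real^'n \<Rightarrow> real) \<Rightarrow> bool" where
  "is_solution m lam aa b u \<longleftrightarrow>
     loc_integrable (\<lambda>x. b x * \<bar>u x\<bar> powr lam) \<and>
     (\<forall>\<alpha>\<in>mindices m. loc_integrable (\<lambda>x. aa \<alpha> x (u x))) \<and>
     (\<forall>\<phi>. test_fun \<phi> \<and> (\<forall>x. \<phi> x \<ge> 0) \<longrightarrow>
        (\<integral>x. (\<Sum>\<alpha>\<in>mindices m. aa \<alpha> x (u x) * mpartial \<alpha> \<phi> x) \<partial>lebesgue)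
          \<ge> (\<integral>x. b x * \<bar>u x\<bar> powr lam * \<phi> x \<partial>lebesgue))"

definition Jfun :: "real \<Rightarrow> (real^'n::finite \<Rightarrow> real) \<Rightarrow> (real^'n \<Rightarrow> real) \<Rightarrow> real \<Rightarrow> real" where
  "Jfun lam b u r = (LINT x : ball 0 r | lebesgue. b x * \<bar>u x\<bar> powr lam)"

definition hfun :: "real \<Rightarrow> real \<Rightarrow> (real^'n::finite \<Rightarrow> real) \<Rightarrow> (real^'n \<Rightarrow> real) \<Rightarrow> real \<Rightarrow> real" where
  "hfun lam \<sigma> a b r =
     (let I = (\<integral>\<^sup>+ x \<in> ball 0 (sqrt \<sigma> * r) - ball 0 (r / sqrt \<sigma>).
                 ennreal (a x powr (lam / (lam - 1)) * b x powr (- 1 / (lam - 1))) \<partial>lebesgue)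
      in if I = \<infinity> then 0 else (enn2real I / r ^ CARD('n)) powr (1 - lam))"

end

(*
  Let A = B(rho') - B(rho) with 0 < rho < rho'. Testing the inequality with a smooth radial
  cutoff that is 1 on B(rho), vanishes outside B(rho') and has m-th derivatives of size
  (rho' - rho)^(-m) on A, and applying Hoelder's inequality on A with exponents lam and
  lam/(lam - 1), gives
    J(rho) (rho' - rho)^m <= K (J(rho') - J(rho))^(1/lam) W(A)^((lam-1)/lam),
  where W is the integral of a^(lam/(lam-1)) b^(-1/(lam-1)).  If r1 <= rho < rho' <= sqrt sigma r1,
  then A lies in every annulus used to define h(r) for r in [rho, rho'], so there the integrand
  r^(...) h(r)^(...) is at most W(A)^((1/lam - 1)/m).  When J at most quadruples from rho to rho',
  the estimate turns this into the claimed inequality on [rho, rho'].  In general [r1, r2] is cut,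
  by the intermediate value theorem for the continuous function J, at points where J doubles,
  and the resulting inequalities telescope.
*)

theory Submission
  imports Defs "HOL-Computational_Algebra.Polynomial"
begin

section \<open>A smooth step function on the real line\<close>

lemma tendsto_power_mult_poly_div_exp_at_top:
  "((\<lambda>s::real. s ^ k * poly p s / exp s) \<longlongrightarrow> 0) at_top"
proof (induction p arbitrary: k)
  case 0
  then show ?case by simp
next
  case (pCons a p)
  have "(\<lambda>s::real. s ^ k * poly (pCons a p) s / exp s) =
      (\<lambda>s. a * (s ^ k / exp s) + s ^ Suc k * poly p s / exp s)"
    by (auto simp: field_simps)
  then show ?case
    using tendsto_add[OF tendsto_mult[OF tendsto_const tendsto_power_div_exp_0] pCons.IH[of "Suc k"]]
    by simp
qed

definition derivative_tower :: "(nat \<Rightarrow> real \<Rightarrow> real) \<Rightarrow> bool" where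
  "derivative_tower D \<longleftrightarrow> (\<forall>j t. (D j has_real_derivative D (Suc j) t) (at t))"

lemma derivative_tower_reflect:
  assumes "derivative_tower D"
  shows "derivative_tower (\<lambda>j t. (-1) ^ j * D j (1 - t))"
  unfolding derivative_tower_def
proof (intro allI)
  fix j t
  have "((\<lambda>t. D j (1 - t)) has_real_derivative D (Suc j) (1 - t) * (-1)) (at t)"
    by (rule DERIV_chain2[where f = "D j"])
       (use assms in \<open>auto simp: derivative_tower_def intro!: derivative_eq_intros\<close>)
  then show "((\<lambda>t. (-1) ^ j * D j (1 - t)) has_real_derivative (-1) ^ Suc j * D (Suc j) (1 - t)) (at t)"
    by (auto intro!: derivative_eq_intros)
qed

lemma derivative_tower_Leibniz:
  assumes A: "derivative_tower A" and B: "derivative_tower B"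
  shows "derivative_tower (\<lambda>j t. \<Sum>i=0..j. real (j choose i) * A i t * B (j - i) t)"
  unfolding derivative_tower_def
proof (intro allI)
  fix n t
  have choose_Suc: "Suc n choose k = (n choose k) + (if k = 0 then 0 else n choose (k - 1))" for k
    by (cases k) simp_all
  have "((\<lambda>t. \<Sum>i=0..n. real (n choose i) * A i t * B (n - i) t) has_real_derivative
      (\<Sum>i=0..n. real (n choose i) * (A (Suc i) t * B (n - i) t + A i t * B (Suc (n - i)) t))) (at t)"
    using A B unfolding derivative_tower_def
    by (intro DERIV_sum) (auto intro!: derivative_eq_intros simp: algebra_simps)
  also have "(\<Sum>i=0..n. real (n choose i) * (A (Suc i) t * B (n - i) t + A i t * B (Suc (n - i)) t))
      = (\<Sum>i=0..Suc n. real (Suc n choose i) * A i t * B (Suc n - i) t)"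
    apply (simp add: choose_Suc algebra_simps sum.distrib)
    apply (subst (4) sum_Suc_reindex)
    apply (auto simp: algebra_simps Suc_diff_le intro: sum.cong)
    done
  finally show "((\<lambda>t. \<Sum>i=0..n. real (n choose i) * A i t * B (n - i) t) has_real_derivative
      (\<Sum>i=0..Suc n. real (Suc n choose i) * A i t * B (Suc n - i) t)) (at t)" .
qed

fun flat_poly :: "nat \<Rightarrow> real poly" where
  "flat_poly 0 = 1"
| "flat_poly (Suc j) = monom 1 2 * (flat_poly j - pderiv (flat_poly j))"

text \<open>\<^term>\<open>flat_fun j\<close> is the \<open>j\<close>-th derivative of the flat function
  \<open>t \<mapsto> exp (-1/t)\<close> for \<open>t > 0\<close>, extended by \<open>0\<close>.\<close>
definition flat_fun :: "nat \<Rightarrow> real \<Rightarrow> real" where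
  "flat_fun j t = (if t > 0 then poly (flat_poly j) (1 / t) * exp (- 1 / t) else 0)"

lemma flat_fun_has_derivative_pos:
  assumes "t > 0"
  shows "((\<lambda>t. poly (flat_poly j) (1 / t) * exp (- 1 / t)) has_real_derivative
           poly (flat_poly (Suc j)) (1 / t) * exp (- 1 / t)) (at t)"
proof -
  have "((\<lambda>t. poly (flat_poly j) (1 / t) * exp (- 1 / t)) has_real_derivative
      poly (pderiv (flat_poly j)) (1 / t) * (- 1 / t\<^sup>2) * exp (- 1 / t)
        + poly (flat_poly j) (1 / t) * (exp (- 1 / t) * (1 / t\<^sup>2))) (at t)"
    using assms
    by (auto intro!: derivative_eq_intros DERIV_chain2[OF poly_DERIV]
             simp: power2_eq_square field_simps)
  moreover have "poly (pderiv (flat_poly j)) (1 / t) * (- 1 / t\<^sup>2) * exp (- 1 / t)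
        + poly (flat_poly j) (1 / t) * (exp (- 1 / t) * (1 / t\<^sup>2))
      = poly (flat_poly (Suc j)) (1 / t) * exp (- 1 / t)"
    by (simp add: poly_monom algebra_simps power2_eq_square)
  ultimately show ?thesis by simp
qed

lemma flat_fun_has_derivative_0: "(flat_fun j has_real_derivative 0) (at 0)"
  unfolding has_field_derivative_iff
proof (rule filterlim_split_at)
  have "eventually (\<lambda>y. 0 = (flat_fun j y - flat_fun j 0) / (y - 0)) (at_left (0::real))"
    unfolding eventually_at_left_field by (rule exI[of _ "-1"]) (auto simp: flat_fun_def)
  then show "((\<lambda>y. (flat_fun j y - flat_fun j 0) / (y - 0)) \<longlongrightarrow> 0) (at_left 0)"
    by (rule Lim_transform_eventually[OF tendsto_const])
  have "((\<lambda>y. (\<lambda>s. s ^ 1 * poly (flat_poly j) s / exp s) (inverse y)) \<longlongrightarrow> 0) (at_right (0::real))"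
    by (rule filterlim_compose[OF tendsto_power_mult_poly_div_exp_at_top filterlim_inverse_at_top_right])
  moreover have "eventually (\<lambda>y. (\<lambda>s. s ^ 1 * poly (flat_poly j) s / exp s) (inverse y)
      = (flat_fun j y - flat_fun j 0) / (y - 0)) (at_right (0::real))"
    unfolding eventually_at_right_field
    by (rule exI[of _ 1]) (auto simp: flat_fun_def exp_minus field_simps)
  ultimately show "((\<lambda>y. (flat_fun j y - flat_fun j 0) / (y - 0)) \<longlongrightarrow> 0) (at_right 0)"
    by (rule Lim_transform_eventually)
qed

lemma derivative_tower_flat_fun: "derivative_tower flat_fun"
  unfolding derivative_tower_def
proof (intro allI)
  fix j and t :: real
  consider "t > 0" | "t < 0" | "t = 0" by linarith
  then show "(flat_fun j has_real_derivative flat_fun (Suc j) t) (at t)"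
  proof cases
    case 1
    have "(flat_fun j has_real_derivative poly (flat_poly (Suc j)) (1 / t) * exp (- 1 / t)) (at t)"
      by (rule has_field_derivative_transform_within_open[OF flat_fun_has_derivative_pos[OF 1],
            of "{0<..}"]) (use 1 in \<open>auto simp: flat_fun_def\<close>)
    then show ?thesis using 1 by (simp add: flat_fun_def)
  next
    case 2
    have "(flat_fun j has_real_derivative 0) (at t)"
      by (rule has_field_derivative_transform_within_open[OF DERIV_const, of "{..<0}"])
         (use 2 in \<open>auto simp: flat_fun_def\<close>)
    then show ?thesis using 2 by (simp add: flat_fun_def)
  next
    case 3
    then show ?thesis using flat_fun_has_derivative_0[of j] by (simp add: flat_fun_def)
  qed
qed

text \<open>By the Leibniz rule, \<^term>\<open>hump j\<close> is the \<open>j\<close>-th derivative of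
  \<^term>\<open>hump 0\<close>, the product of the flat functions at \<open>t\<close> and \<open>1 - t\<close>.\<close>
definition hump :: "nat \<Rightarrow> real \<Rightarrow> real" where
  "hump j t = (\<Sum>i=0..j. real (j choose i) * flat_fun i t * ((-1) ^ (j - i) * flat_fun (j - i) (1 - t)))"

lemma hump_has_derivative: "(hump j has_real_derivative hump (Suc j) t) (at t)"
  using derivative_tower_Leibniz[OF derivative_tower_flat_fun derivative_tower_reflect[OF derivative_tower_flat_fun]]
  unfolding derivative_tower_def hump_def by blast

lemma continuous_on_hump: "continuous_on A (hump j)"
  by (meson DERIV_isCont hump_has_derivative continuous_at_imp_continuous_on)

lemma hump_outside: "t \<le> 0 \<or> t \<ge> 1 \<Longrightarrow> hump j t = 0"
  by (auto simp: hump_def flat_fun_def intro!: sum.neutral)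

lemma hump_0_nonneg: "hump 0 t \<ge> 0"
  by (simp add: hump_def flat_fun_def)

lemma hump_integrable: "hump 0 integrable_on {s..t}"
  by (rule integrable_continuous_real[OF continuous_on_hump])

definition hump_mass :: real where
  "hump_mass = integral {-1..1} (hump 0)"

lemma hump_mass_pos: "hump_mass > 0"
proof -
  have "hump_mass \<ge> 0" unfolding hump_mass_def
    by (rule integral_nonneg[OF hump_integrable hump_0_nonneg])
  moreover have "hump_mass \<noteq> 0"
  proof
    assume "hump_mass = 0"
    then have "hump 0 (1/2) = 0"
      using integral_eq_0_iff[of "-1" 1 "hump 0", OF continuous_on_hump] hump_0_nonneg
      by (auto simp: hump_mass_def)
    then show False by (simp add: hump_def flat_fun_def)
  qed
  ultimately show ?thesis by simp
qed

lemma integral_hump_nonpos_end: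
  assumes "t \<le> 0"
  shows "integral {-1..t} (hump 0) = 0"
  by (rule integral_unique[OF has_integral_is_0]) (use assms in \<open>auto simp: hump_outside\<close>)

lemma integral_hump_split:
  assumes "-1 \<le> s" "s \<le> t"
  shows "integral {-1..t} (hump 0) = integral {-1..s} (hump 0) + integral {s..t} (hump 0)"
  using assms hump_integrable by (simp add: Henstock_Kurzweil_Integration.integral_combine)

lemma integral_hump_ge_1:
  assumes "t \<ge> 1"
  shows "integral {-1..t} (hump 0) = hump_mass"
proof -
  have "integral {1..t} (hump 0) = 0"
    by (rule integral_unique[OF has_integral_is_0]) (auto simp: hump_outside)
  then show ?thesis
    using integral_hump_split[of 1 t] assms by (simp add: hump_mass_def)
qed

lemma integral_hump_bounds: "0 \<le> integral {-1..t} (hump 0) \<and> integral {-1..t} (hump 0) \<le> hump_mass"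
proof (cases "-1 \<le> t \<and> t \<le> 1")
  case True
  have "integral {-1..t} (hump 0) \<ge> 0" "integral {t..1} (hump 0) \<ge> 0"
    by (intro integral_nonneg hump_integrable hump_0_nonneg)+
  then show ?thesis
    using integral_hump_split[of t 1] True by (simp add: hump_mass_def)
next
  case False
  then show ?thesis
    using hump_mass_pos integral_hump_nonpos_end[of t] integral_hump_ge_1[of t] by force
qed

lemma integral_hump_has_derivative:
  assumes "t > -1"
  shows "((\<lambda>x. integral {-1..x} (hump 0)) has_real_derivative hump 0 t) (at t)"
proof -
  have "((\<lambda>x. integral {-1..x} (hump 0)) has_real_derivative hump 0 t) (at t within {-1..t+1})"
    by (rule integral_has_real_derivative) (use assms continuous_on_hump in auto)
  then show ?thesis
    using assms by (subst (asm) at_within_interior) (auto simp: interior_atLeastAtMost_real)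
qed

text \<open>\<^term>\<open>smooth_step 0\<close> is smooth, equal to \<open>1\<close> on \<open>t \<le> 0\<close> and to \<open>0\<close> on
  \<open>t \<ge> 1\<close>; \<^term>\<open>smooth_step j\<close> is its \<open>j\<close>-th derivative.\<close>
definition smooth_step :: "nat \<Rightarrow> real \<Rightarrow> real" where
  "smooth_step j t = (case j of
      0 \<Rightarrow> 1 - integral {-1..t} (hump 0) / hump_mass
    | Suc k \<Rightarrow> - hump k t / hump_mass)"

lemma smooth_step_has_derivative: "(smooth_step j has_real_derivative smooth_step (Suc j) t) (at t)"
proof (cases j)
  case 0
  show ?thesis
  proof (cases "t > -1")
    case True
    then show ?thesis unfolding 0 smooth_step_def
      using hump_mass_pos by (auto intro!: derivative_eq_intros integral_hump_has_derivative)
  next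
    case False
    have "((\<lambda>x. 1 - integral {-1..x} (hump 0) / hump_mass) has_real_derivative 0) (at t)"
      by (rule has_field_derivative_transform_within_open[OF DERIV_const, of "{..<0}"])
         (use False integral_hump_nonpos_end in auto)
    then show ?thesis unfolding 0 smooth_step_def using False hump_outside[of t 0] by simp
  qed
next
  case (Suc k)
  then show ?thesis unfolding smooth_step_def
    using hump_mass_pos by (auto intro!: derivative_eq_intros hump_has_derivative)
qed

lemma continuous_on_smooth_step: "continuous_on A (smooth_step j)"
  by (meson DERIV_isCont smooth_step_has_derivative continuous_at_imp_continuous_on)

lemma continuous_on_smooth_step_comp [continuous_intros]:
  "continuous_on S f \<Longrightarrow> continuous_on S (\<lambda>x. smooth_step j (f x))"
  by (rule continuous_on_compose2[OF continuous_on_smooth_step[of UNIV]]) auto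

lemma smooth_step_0_nonpos: "t \<le> 0 \<Longrightarrow> smooth_step 0 t = 1"
  by (simp add: smooth_step_def integral_hump_nonpos_end)

lemma smooth_step_0_ge_1: "t \<ge> 1 \<Longrightarrow> smooth_step 0 t = 0"
  using hump_mass_pos by (simp add: smooth_step_def integral_hump_ge_1)

lemma smooth_step_0_bounds: "0 \<le> smooth_step 0 t \<and> smooth_step 0 t \<le> 1"
  using integral_hump_bounds[of t] hump_mass_pos by (simp add: smooth_step_def)

lemma smooth_step_Suc_outside: "t \<le> 0 \<or> t \<ge> 1 \<Longrightarrow> smooth_step (Suc j) t = 0"
  by (simp add: smooth_step_def hump_outside)

lemma smooth_step_ge_1: "t \<ge> 1 \<Longrightarrow> smooth_step j t = 0"
  by (cases j) (simp_all add: smooth_step_0_ge_1 smooth_step_Suc_outside)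

lemma smooth_step_clamp: "smooth_step j t = smooth_step j (max 0 (min 1 t))"
  by (cases j) (auto simp: smooth_step_0_nonpos smooth_step_0_ge_1 smooth_step_Suc_outside
      max_def min_def)

lemma smooth_step_bounded: "\<exists>B. \<forall>t. \<bar>smooth_step j t\<bar> \<le> B"
proof -
  have "compact (smooth_step j ` {0..1})"
    by (rule compact_continuous_image[OF continuous_on_smooth_step]) simp
  then obtain B where B: "\<And>t. t \<in> {0..1} \<Longrightarrow> \<bar>smooth_step j t\<bar> \<le> B"
    using compact_imp_bounded bounded_iff by (metis image_eqI real_norm_def)
  have "\<bar>smooth_step j t\<bar> \<le> B" for t
    using B[of "max 0 (min 1 t)"] smooth_step_clamp[of j t] by simp
  then show ?thesis by blast
qed

definition smooth_step_bound :: "nat \<Rightarrow> real" where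
  "smooth_step_bound j = (SOME B. \<forall>t. \<bar>smooth_step j t\<bar> \<le> B)"

lemma abs_smooth_step_le: "\<bar>smooth_step j t\<bar> \<le> smooth_step_bound j"
  using someI_ex[OF smooth_step_bounded[of j]] unfolding smooth_step_bound_def by blast

lemma smooth_step_bound_nonneg: "smooth_step_bound j \<ge> 0"
  using abs_smooth_step_le[of j 0] by linarith

section \<open>A radial cutoff function and its derivatives\<close>

definition cart_monomial :: "('n::finite \<Rightarrow> nat) \<Rightarrow> real^'n \<Rightarrow> real" where
  "cart_monomial \<beta> x = (\<Prod>k\<in>UNIV. (x $ k) ^ \<beta> k)"

definition radial_param :: "real \<Rightarrow> real \<Rightarrow> real^'n::finite \<Rightarrow> real" where
  "radial_param r r' x = (norm x ^ 2 - r ^ 2) / (r' ^ 2 - r ^ 2)"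

definition radial_bump :: "real \<Rightarrow> real \<Rightarrow> real^'n::finite \<Rightarrow> real" where
  "radial_bump r r' x = smooth_step 0 (radial_param r r' x)"

text \<open>A term \<open>(c, \<beta>, j)\<close> stands for the function
  \<open>x \<mapsto> c x\<^sup>\<beta> \<eta>\<^sup>(\<^sup>j\<^sup>)(q x) / (r'\<^sup>2 - r\<^sup>2)\<^sup>j\<close>, where \<open>\<eta>\<close> is the smooth step and \<open>q\<close> the
  radial parameter; a list of terms stands for their sum.\<close>
type_synonym 'n bump_term = "real \<times> ('n \<Rightarrow> nat) \<times> nat"

definition term_val :: "real \<Rightarrow> real \<Rightarrow> 'n::finite bump_term \<Rightarrow> real^'n \<Rightarrow> real" where
  "term_val r r' tm x = (case tm of (c, \<beta>, j) \<Rightarrow>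
     c * cart_monomial \<beta> x * smooth_step j (radial_param r r' x) / (r' ^ 2 - r ^ 2) ^ j)"

definition terms_val :: "real \<Rightarrow> real \<Rightarrow> 'n::finite bump_term list \<Rightarrow> real^'n \<Rightarrow> real" where
  "terms_val r r' ts x = (\<Sum>tm\<leftarrow>ts. term_val r r' tm x)"

definition term_partial :: "'n::finite \<Rightarrow> 'n bump_term \<Rightarrow> 'n bump_term list" where
  "term_partial i tm = (case tm of (c, \<beta>, j) \<Rightarrow>
     (if \<beta> i = 0 then [] else [(c * real (\<beta> i), \<beta>(i := \<beta> i - 1), j)])
     @ [(2 * c, \<beta>(i := Suc (\<beta> i)), Suc j)])"

definition terms_partial :: "'n::finite \<Rightarrow> 'n bump_term list \<Rightarrow> 'n bump_term list" where
  "terms_partial i ts = concat (map (term_partial i) ts)"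

definition bump_terms :: "'n::finite list \<Rightarrow> 'n bump_term list" where
  "bump_terms ds = foldr terms_partial ds [(1, \<lambda>_. 0, 0)]"

lemma norm_add_axis_power2:
  "norm (x + t *\<^sub>R axis i 1 :: real^'n::finite) ^ 2 = norm x ^ 2 + 2 * x $ i * t + t ^ 2"
  unfolding power2_norm_eq_inner
  by (simp add: inner_add_left inner_add_right inner_axis inner_commute[of "axis i 1"]
      inner_axis_axis algebra_simps power2_eq_square)

lemma cart_monomial_split:
  "cart_monomial \<beta> x = x $ i ^ \<beta> i * (\<Prod>k\<in>UNIV - {i}. (x $ k) ^ \<beta> k)"
  unfolding cart_monomial_def by (simp add: prod.remove)

lemma cart_monomial_upd:
  "cart_monomial (\<beta>(i := v)) x = x $ i ^ v * (\<Prod>k\<in>UNIV - {i}. (x $ k) ^ \<beta> k)"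
  unfolding cart_monomial_split[of _ _ i] by (auto intro!: prod.cong)

lemma cart_monomial_add_axis:
  "cart_monomial \<beta> (x + t *\<^sub>R axis i 1) = (x $ i + t) ^ \<beta> i * (\<Prod>k\<in>UNIV - {i}. (x $ k) ^ \<beta> k)"
  unfolding cart_monomial_split[of _ _ i] by (auto simp: axis_def intro!: prod.cong)

lemma term_val_has_derivative:
  assumes "0 < r" "r < r'"
  shows "((\<lambda>t. term_val r r' tm (x + t *\<^sub>R axis i 1)) has_real_derivative
           terms_val r r' (term_partial i tm) x) (at 0)"
proof -
  obtain c \<beta> j where tm: "tm = (c, \<beta>, j)" by (cases tm) auto
  define R where "R = (\<Prod>k\<in>UNIV - {i}. (x $ k) ^ \<beta> k)"
  define D where "D = r' ^ 2 - r ^ 2"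
  have D: "D > 0" unfolding D_def using assms by (simp add: power_strict_mono)
  have val: "term_val r r' tm (x + t *\<^sub>R axis i 1) =
      c * ((x $ i + t) ^ \<beta> i * R) * smooth_step j ((norm x ^ 2 + 2 * x $ i * t + t ^ 2 - r ^ 2) / D) / D ^ j"
    for t
    unfolding term_val_def tm radial_param_def norm_add_axis_power2 cart_monomial_add_axis R_def D_def
    by simp
  have step: "((\<lambda>t. smooth_step j ((norm x ^ 2 + 2 * x $ i * t + t ^ 2 - r ^ 2) / D)) has_real_derivative
        smooth_step (Suc j) ((norm x ^ 2 + 2 * x $ i * 0 + 0 ^ 2 - r ^ 2) / D) * ((2 * x $ i + 2 * 0) / D)) (at 0)"
    by (rule DERIV_chain2[OF smooth_step_has_derivative])
       (use D in \<open>auto intro!: derivative_eq_intros simp: power2_eq_square\<close>)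
  have "((\<lambda>t. term_val r r' tm (x + t *\<^sub>R axis i 1)) has_real_derivative
      (c * (real (\<beta> i) * x $ i ^ (\<beta> i - 1) * R) * smooth_step j (radial_param r r' x)
        + c * (x $ i ^ \<beta> i * R) * (smooth_step (Suc j) (radial_param r r' x) * (2 * x $ i / D))) / D ^ j)
      (at 0)"
    unfolding val using step D unfolding radial_param_def D_def[symmetric]
    by (auto intro!: derivative_eq_intros simp: power2_eq_square)
  moreover have "x $ i ^ \<beta> i * x $ i = x $ i ^ Suc (\<beta> i)" by simp
  then have "(c * (real (\<beta> i) * x $ i ^ (\<beta> i - 1) * R) * smooth_step j (radial_param r r' x)
        + c * (x $ i ^ \<beta> i * R) * (smooth_step (Suc j) (radial_param r r' x) * (2 * x $ i / D))) / D ^ j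
      = terms_val r r' (term_partial i tm) x"
    unfolding terms_val_def term_partial_def tm term_val_def D_def[symmetric]
    using D by (auto simp: field_simps cart_monomial_upd R_def[symmetric])
  ultimately show ?thesis by simp
qed

lemma terms_val_has_derivative:
  assumes "0 < r" "r < r'"
  shows "((\<lambda>t. terms_val r r' ts (x + t *\<^sub>R axis i 1)) has_real_derivative
           terms_val r r' (terms_partial i ts) x) (at 0)"
proof (induction ts)
  case Nil
  then show ?case by (simp add: terms_val_def terms_partial_def)
next
  case (Cons tm ts)
  then show ?case
    using DERIV_add[OF term_val_has_derivative[OF assms] Cons.IH]
    by (simp add: terms_val_def terms_partial_def)
qed

lemma iter_partial_radial_bump:
  assumes "0 < r" "r < r'"
  shows "iter_partial ds (radial_bump r r') = terms_val r r' (bump_terms ds)"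
proof -
  have partial: "dpartial i (terms_val r r' ts) = terms_val r r' (terms_partial i ts)" for i ts
    by (rule ext) (simp add: dpartial_def DERIV_imp_deriv[OF terms_val_has_derivative[OF assms]])
  have start: "radial_bump r r' = terms_val r r' [(1, \<lambda>_. 0, 0)]"
    by (rule ext) (simp add: radial_bump_def terms_val_def term_val_def cart_monomial_def)
  show ?thesis
    unfolding iter_partial_def bump_terms_def by (induction ds) (simp_all add: partial start)
qed

lemma continuous_on_terms_val: "continuous_on UNIV (terms_val r r' ts)"
proof -
  have "continuous_on UNIV (term_val r r' tm)" for tm
    unfolding term_val_def[abs_def] cart_monomial_def radial_param_def
    by (cases tm) (auto simp: divide_inverse intro!: continuous_intros)
  then show ?thesis
    unfolding terms_val_def[abs_def] by (induction ts) (auto intro!: continuous_intros)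
qed

lemma radial_param_nonpos:
  assumes "0 < r" "r < r'" "norm x \<le> r"
  shows "radial_param r r' x \<le> 0"
  using assms by (simp add: radial_param_def divide_nonpos_pos power_mono power_strict_mono)

lemma radial_param_ge_1:
  assumes "0 < r" "r < r'" "norm x \<ge> r'"
  shows "radial_param r r' x \<ge> 1"
  using assms by (simp add: radial_param_def power_mono power_strict_mono)

lemma radial_bump_inside: "0 < r \<Longrightarrow> r < r' \<Longrightarrow> norm x \<le> r \<Longrightarrow> radial_bump r r' x = 1"
  by (simp add: radial_bump_def radial_param_nonpos smooth_step_0_nonpos)

lemma radial_bump_outside: "0 < r \<Longrightarrow> r < r' \<Longrightarrow> norm x \<ge> r' \<Longrightarrow> radial_bump r r' x = 0"
  by (simp add: radial_bump_def radial_param_ge_1 smooth_step_0_ge_1)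

lemma radial_bump_bounds: "0 \<le> radial_bump r r' x \<and> radial_bump r r' x \<le> 1"
  by (simp add: radial_bump_def smooth_step_0_bounds)

lemma continuous_on_radial_bump: "continuous_on UNIV (radial_bump r r')"
  by (auto simp: radial_bump_def[abs_def] radial_param_def divide_inverse intro!: continuous_intros)

lemma test_fun_radial_bump:
  assumes "0 < r" "r < r'"
  shows "test_fun (radial_bump r r' :: real^'n::finite \<Rightarrow> real)"
  unfolding test_fun_def iter_partial_radial_bump[OF assms]
proof (intro conjI allI)
  show "continuous_on UNIV (terms_val r r' (bump_terms ds))" for ds :: "'n list"
    by (rule continuous_on_terms_val)
  show "(\<lambda>t. terms_val r r' (bump_terms ds) (x + t *\<^sub>R axis i 1)) differentiable at 0"
    for ds :: "'n list" and x i
    using terms_val_has_derivative[OF assms] real_differentiable_def by blast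
  have "{x :: real^'n. radial_bump r r' x \<noteq> 0} \<subseteq> cball 0 r'"
    using radial_bump_outside[OF assms] by (force simp: not_le)
  then show "bounded {x :: real^'n. radial_bump r r' x \<noteq> 0}"
    using bounded_cball bounded_subset by blast
qed

text \<open>Every term produced by \<open>k\<close> differentiations has \<open>2 j = |\<beta>| + k\<close> and \<open>j \<le> k\<close>;
  this homogeneity makes the \<open>k\<close>-th derivatives of the cutoff scale like \<open>(r' - r)\<^sup>-\<^sup>k\<close>.\<close>
definition term_of_order :: "nat \<Rightarrow> 'n::finite bump_term \<Rightarrow> bool" where
  "term_of_order k tm \<longleftrightarrow> (case tm of (c, \<beta>, j) \<Rightarrow> 2 * j = sum \<beta> UNIV + k \<and> j \<le> k)"

lemma sum_fun_upd_add:
  "sum ((\<beta>::'n::finite \<Rightarrow> nat)(i := v)) UNIV + \<beta> i = sum \<beta> UNIV + v"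
proof -
  have "sum (\<beta>(i := v)) (UNIV - {i}) = sum \<beta> (UNIV - {i})"
    by (intro sum.cong) auto
  then show ?thesis
    using sum.remove[of UNIV i "\<beta>(i := v)"] sum.remove[of UNIV i \<beta>] by simp
qed

lemma term_of_order_term_partial:
  assumes "term_of_order k tm" "tm' \<in> set (term_partial i tm)"
  shows "term_of_order (Suc k) tm'"
proof -
  obtain c \<beta> j where tm: "tm = (c, \<beta>, j)" by (cases tm) auto
  from assms(2) consider "\<beta> i > 0" "tm' = (c * real (\<beta> i), \<beta>(i := \<beta> i - 1), j)"
    | "tm' = (2 * c, \<beta>(i := Suc (\<beta> i)), Suc j)"
    by (auto simp: term_partial_def tm split: if_splits)
  then show ?thesis
    using assms(1) sum_fun_upd_add[of \<beta> i "\<beta> i - 1"] sum_fun_upd_add[of \<beta> i "Suc (\<beta> i)"]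
    by cases (auto simp: term_of_order_def tm)
qed

lemma term_of_order_bump_terms:
  "tm \<in> set (bump_terms ds) \<Longrightarrow> term_of_order (length ds) tm"
proof (induction ds arbitrary: tm)
  case Nil
  then show ?case by (simp add: bump_terms_def term_of_order_def)
next
  case (Cons i ds)
  then obtain tm1 where "tm1 \<in> set (bump_terms ds)" "tm \<in> set (term_partial i tm1)"
    by (auto simp: bump_terms_def terms_partial_def)
  then show ?case using Cons.IH term_of_order_term_partial by fastforce
qed

lemma term_val_outside_annulus:
  assumes "0 < r" "r < r'" "term_of_order k tm" "k \<ge> 1" "norm x \<le> r \<or> norm x \<ge> r'"
  shows "term_val r r' tm x = 0"
proof -
  obtain c \<beta> j where tm: "tm = (c, \<beta>, j)" by (cases tm) auto
  with assms(3,4) obtain j' where "j = Suc j'"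
    by (cases j) (auto simp: term_of_order_def)
  moreover have "radial_param r r' x \<le> 0 \<or> radial_param r r' x \<ge> 1"
    using assms radial_param_nonpos radial_param_ge_1 by blast
  ultimately show ?thesis by (simp add: term_val_def tm smooth_step_Suc_outside)
qed

lemma abs_cart_monomial_le:
  assumes "norm x \<le> R"
  shows "\<bar>cart_monomial \<beta> x\<bar> \<le> R ^ sum \<beta> UNIV"
proof -
  have "\<bar>cart_monomial \<beta> x\<bar> = (\<Prod>k\<in>UNIV. \<bar>x $ k\<bar> ^ \<beta> k)"
    by (simp add: cart_monomial_def abs_prod power_abs)
  also have "\<dots> \<le> (\<Prod>k\<in>UNIV. R ^ \<beta> k)"
    by (intro prod_mono) (auto intro!: power_mono component_le_norm_cart[THEN order_trans] assms)
  also have "\<dots> = R ^ sum \<beta> UNIV"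
    by (simp add: power_sum)
  finally show ?thesis .
qed

text \<open>Here \<open>r'\<^sup>2 - r\<^sup>2 \<ge> (r' - r) r'\<close> is used together with \<open>|x\<^sup>\<beta>| \<le> r'\<^sup>|\<^sup>\<beta>\<^sup>|\<close>.\<close>
lemma abs_cart_monomial_mult_power_le:
  assumes "0 < r" "r < r'" "norm x < r'" "2 * j = sum \<beta> UNIV + k" "j \<le> k"
  shows "\<bar>cart_monomial \<beta> x\<bar> * (r' - r) ^ k \<le> (r' ^ 2 - r ^ 2) ^ j"
proof -
  define \<delta> where "\<delta> = r' - r"
  have \<delta>: "\<delta> > 0" "\<delta> \<le> r'" using assms by (auto simp: \<delta>_def)
  have "\<delta> ^ k = \<delta> ^ (k - j) * \<delta> ^ j" using assms by (simp add: power_add[symmetric])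
  also have "\<dots> \<le> r' ^ (k - j) * \<delta> ^ j"
    using \<delta> by (intro mult_right_mono power_mono) auto
  finally have "\<bar>cart_monomial \<beta> x\<bar> * \<delta> ^ k \<le> r' ^ sum \<beta> UNIV * (r' ^ (k - j) * \<delta> ^ j)"
    using abs_cart_monomial_le[of x r' \<beta>] assms \<delta> by (intro mult_mono) auto
  also have "\<dots> = r' ^ (sum \<beta> UNIV + (k - j)) * \<delta> ^ j"
    by (simp add: power_add)
  also have "sum \<beta> UNIV + (k - j) = j" using assms by linarith
  also have "r' ^ j * \<delta> ^ j \<le> (r' ^ 2 - r ^ 2) ^ j"
    using assms \<delta> unfolding power_mult_distrib[symmetric]
    by (intro power_mono) (auto simp: \<delta>_def power2_eq_square algebra_simps)
  finally show ?thesis by (simp add: \<delta>_def)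
qed

definition term_weight :: "'n::finite bump_term \<Rightarrow> real" where
  "term_weight tm = (case tm of (c, \<beta>, j) \<Rightarrow> \<bar>c\<bar> * smooth_step_bound j)"

lemma abs_term_val_le:
  assumes "0 < r" "r < r'" "term_of_order k tm"
  shows "\<bar>term_val r r' tm x\<bar> \<le> term_weight tm / (r' - r) ^ k"
proof -
  obtain c \<beta> j where tm: "tm = (c, \<beta>, j)" by (cases tm) auto
  have ord: "2 * j = sum \<beta> UNIV + k" "j \<le> k" using assms(3) by (auto simp: term_of_order_def tm)
  define D where "D = r' ^ 2 - r ^ 2"
  have D_pos: "D > 0" using assms by (simp add: D_def power_strict_mono)
  have bound: "\<bar>cart_monomial \<beta> x * smooth_step j (radial_param r r' x)\<bar> * (r' - r) ^ k
      \<le> smooth_step_bound j * D ^ j"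
  proof (cases "norm x < r'")
    case True
    then have "(\<bar>cart_monomial \<beta> x\<bar> * (r' - r) ^ k) * \<bar>smooth_step j (radial_param r r' x)\<bar>
        \<le> D ^ j * smooth_step_bound j"
      using abs_cart_monomial_mult_power_le[OF assms(1,2) True ord] abs_smooth_step_le D_pos
      by (intro mult_mono) (auto simp: D_def)
    then show ?thesis by (simp add: abs_mult algebra_simps)
  next
    case False
    then have "smooth_step j (radial_param r r' x) = 0"
      using assms by (simp add: radial_param_ge_1 smooth_step_ge_1)
    then show ?thesis using smooth_step_bound_nonneg[of j] D_pos by simp
  qed
  have "\<bar>term_val r r' tm x\<bar> * (r' - r) ^ k
      = \<bar>c\<bar> * (\<bar>cart_monomial \<beta> x * smooth_step j (radial_param r r' x)\<bar> * (r' - r) ^ k) / D ^ j"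
    using D_pos by (simp add: term_val_def tm D_def abs_mult)
  also have "\<dots> \<le> \<bar>c\<bar> * (smooth_step_bound j * D ^ j) / D ^ j"
    using bound D_pos by (intro divide_right_mono mult_left_mono) auto
  finally show ?thesis
    using D_pos assms by (simp add: term_weight_def tm pos_le_divide_eq)
qed

definition bump_deriv_const :: "nat \<Rightarrow> 'n::finite itself \<Rightarrow> real" where
  "bump_deriv_const m _ =
     (\<Sum>ds \<in> {ds :: 'n list. length ds = m}. \<Sum>tm\<leftarrow>bump_terms ds. term_weight tm)"

lemma term_weight_nonneg: "term_weight tm \<ge> 0"
  by (cases tm) (simp add: term_weight_def smooth_step_bound_nonneg)

lemma bump_deriv_const_nonneg: "bump_deriv_const m TYPE('n::finite) \<ge> 0"
  unfolding bump_deriv_const_def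
  by (intro sum_nonneg sum_list_nonneg) (auto simp: term_weight_nonneg)

lemma abs_iter_partial_radial_bump_le:
  fixes ds :: "'n::finite list"
  assumes "0 < r" "r < r'" "length ds = m" "m \<ge> 1"
  shows "\<bar>iter_partial ds (radial_bump r r') x\<bar>
           \<le> bump_deriv_const m TYPE('n) / (r' - r) ^ m * indicator (ball 0 r' - ball 0 r) x"
proof -
  have ord: "term_of_order m tm" if "tm \<in> set (bump_terms ds)" for tm
    using term_of_order_bump_terms[OF that] assms(3) by simp
  show ?thesis
  proof (cases "x \<in> ball 0 r' - ball 0 r")
    case True
    have "\<bar>\<Sum>tm\<leftarrow>bump_terms ds. term_val r r' tm x\<bar> \<le> (\<Sum>tm\<leftarrow>bump_terms ds. \<bar>term_val r r' tm x\<bar>)"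
      using sum_list_abs[of "map (\<lambda>tm. term_val r r' tm x) (bump_terms ds)"] by (simp add: comp_def)
    also have "\<dots> \<le> (\<Sum>tm\<leftarrow>bump_terms ds. term_weight tm * inverse ((r' - r) ^ m))"
      using abs_term_val_le[OF assms(1,2) ord] by (intro sum_list_mono) (simp add: divide_inverse)
    also have "\<dots> \<le> bump_deriv_const m TYPE('n) / (r' - r) ^ m"
      unfolding sum_list_mult_const bump_deriv_const_def divide_inverse
      using finite_lists_length_eq[of "UNIV :: 'n set" m] assms(1-3)
      by (intro mult_right_mono member_le_sum) (auto intro!: sum_list_nonneg term_weight_nonneg)
    finally show ?thesis
      using True by (simp add: iter_partial_radial_bump[OF assms(1,2)] terms_val_def)
  next
    case False
    then have "norm x \<le> r \<or> norm x \<ge> r'" by auto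
    then have "map (\<lambda>tm. term_val r r' tm x) (bump_terms ds) = map (\<lambda>_. 0) (bump_terms ds)"
      using term_val_outside_annulus[OF assms(1,2) ord assms(4)] by (intro map_cong) auto
    then show ?thesis
      unfolding iter_partial_radial_bump[OF assms(1,2)] terms_val_def
      using False by (simp add: map_replicate_const sum_list_replicate)
  qed
qed

lemma mpartial_eq_iter_partial:
  fixes \<alpha> :: "'n::finite \<Rightarrow> nat"
  assumes "\<alpha> \<in> mindices m"
  obtains ds where "mpartial \<alpha> f = iter_partial ds f" "length ds = m"
proof -
  obtain xs where xs: "mset xs = (\<Sum>i\<in>UNIV. replicate_mset (\<alpha> i) i)"
    using ex_mset by blast
  have "count (\<Sum>i\<in>UNIV. replicate_mset (\<alpha> i) i) j = \<alpha> j" for j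
    unfolding count_sum by (simp add: count_replicate_mset)
  then have "\<exists>ds. \<forall>i. count (mset ds) i = \<alpha> i"
    using xs by (intro exI[of _ xs]) simp
  define ds where "ds = (SOME ds. \<forall>i. count (mset ds) i = \<alpha> i)"
  have count: "\<forall>i. count (mset ds) i = \<alpha> i"
    unfolding ds_def by (rule someI_ex) fact
  have "length ds = size (mset ds)" by simp
  also have "\<dots> = sum (count (mset ds)) (set_mset (mset ds))"
    by (rule size_multiset_overloaded_eq)
  also have "\<dots> = sum (count (mset ds)) UNIV"
    by (intro sum.mono_neutral_left) auto
  also have "\<dots> = m" using count assms by (simp add: mindices_def)
  finally show ?thesis
    using that by (simp add: mpartial_def ds_def[symmetric])
qed

lemma abs_mpartial_radial_bump_le:
  fixes \<alpha> :: "'n::finite \<Rightarrow> nat"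
  assumes "0 < r" "r < r'" "\<alpha> \<in> mindices m" "m \<ge> 1"
  shows "\<bar>mpartial \<alpha> (radial_bump r r') x\<bar>
           \<le> bump_deriv_const m TYPE('n) / (r' - r) ^ m * indicator (ball 0 r' - ball 0 r) x"
proof -
  obtain ds where "mpartial \<alpha> (radial_bump r r') = iter_partial ds (radial_bump r r')" "length ds = m"
    using mpartial_eq_iter_partial[OF assms(3)] .
  then show ?thesis using abs_iter_partial_radial_bump_le[OF assms(1,2) _ assms(4)] by simp
qed

section \<open>Hoelder's inequality, upper integrals and doubling\<close>

lemma nn_integral_mult_le_Holder:
  fixes f g :: "'a \<Rightarrow> real"
  assumes pq: "p > 1" "q > 1" "1 / p + 1 / q = 1"
    and meas: "f \<in> borel_measurable M" "g \<in> borel_measurable M"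
    and nonneg: "\<And>x. f x \<ge> 0" "\<And>x. g x \<ge> 0"
    and A: "(\<integral>\<^sup>+ x. ennreal (f x powr p) \<partial>M) = ennreal A" "A \<ge> 0"
    and B: "(\<integral>\<^sup>+ x. ennreal (g x powr q) \<partial>M) = ennreal B" "B \<ge> 0"
  shows "(\<integral>\<^sup>+ x. ennreal (f x * g x) \<partial>M) \<le> ennreal (A powr (1 / p) * B powr (1 / q))"
proof (cases "A = 0 \<or> B = 0")
  case True
  have AE_zero: "AE x in M. h x = 0"
    if "(\<integral>\<^sup>+ x. ennreal (h x powr s) \<partial>M) = 0" "h \<in> borel_measurable M" "\<And>x. h x \<ge> 0"
    for h :: "'a \<Rightarrow> real" and s
  proof -
    have "AE x in M. ennreal (h x powr s) = 0"
      using that(1) by (subst nn_integral_0_iff_AE[symmetric]) (use that(2) in auto)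
    then show ?thesis
      by eventually_elim (use that(3) in \<open>auto simp: order.order_iff_strict\<close>)
  qed
  from True have "AE x in M. f x = 0 \<or> g x = 0"
    using AE_zero[of f p] AE_zero[of g q] A B meas nonneg by auto
  then have "(\<integral>\<^sup>+ x. ennreal (f x * g x) \<partial>M) = 0"
    by (subst nn_integral_0_iff_AE) (use meas in \<open>auto elim!: eventually_mono\<close>)
  then show ?thesis by simp
next
  case False
  then have A_pos: "A > 0" and B_pos: "B > 0" using A B by auto
  define \<alpha> where "\<alpha> = A powr (1 / p)"
  define \<beta> where "\<beta> = B powr (1 / q)"
  have \<alpha>: "\<alpha> > 0" "\<alpha> powr p = A" using A_pos pq by (auto simp: \<alpha>_def powr_powr)
  have \<beta>: "\<beta> > 0" "\<beta> powr q = B" using B_pos pq by (auto simp: \<beta>_def powr_powr)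
  have Young: "f x * g x \<le> (\<alpha> * \<beta> / (A * p)) * f x powr p + (\<alpha> * \<beta> / (B * q)) * g x powr q" for x
  proof -
    have "(f x / \<alpha>) * (g x / \<beta>) \<le> (f x / \<alpha>) powr p / p + (g x / \<beta>) powr q / q"
      by (rule Youngs_inequality) (use pq nonneg \<alpha> \<beta> in auto)
    also have "\<dots> = f x powr p / (A * p) + g x powr q / (B * q)"
      using \<alpha> \<beta> nonneg by (simp add: powr_divide)
    finally show ?thesis using \<alpha> \<beta> by (simp add: field_simps)
  qed
  have "(\<integral>\<^sup>+ x. ennreal (f x * g x) \<partial>M) \<le>
      (\<integral>\<^sup>+ x. ennreal (\<alpha> * \<beta> / (A * p)) * ennreal (f x powr p)
              + ennreal (\<alpha> * \<beta> / (B * q)) * ennreal (g x powr q) \<partial>M)"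
    using Young \<alpha> \<beta> A_pos B_pos pq
    by (intro nn_integral_mono)
       (auto simp: ennreal_mult[symmetric] ennreal_plus[symmetric] simp del: ennreal_plus)
  also have "\<dots> = ennreal (\<alpha> * \<beta> / (A * p)) * ennreal A + ennreal (\<alpha> * \<beta> / (B * q)) * ennreal B"
    using meas by (simp add: nn_integral_add nn_integral_cmult A B)
  also have "\<dots> = ennreal (\<alpha> * \<beta> * (1 / p + 1 / q))"
    using \<alpha> \<beta> A_pos B_pos pq
    by (simp add: ennreal_mult[symmetric] ennreal_plus[symmetric] field_simps del: ennreal_plus)
  finally show ?thesis
    using pq by (simp add: \<alpha>_def \<beta>_def)
qed

text \<open>The integrand of the theorem need not be measurable in \<open>r\<close>, so its integral is
  bounded through Borel measurable majorants.\<close>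
definition upper_integral_le :: "(real \<Rightarrow> ennreal) \<Rightarrow> real \<Rightarrow> real \<Rightarrow> real \<Rightarrow> bool" where
  "upper_integral_le g a b c \<longleftrightarrow>
     (\<exists>S \<in> borel_measurable lborel. (\<forall>r\<in>{a..b}. g r \<le> S r) \<and>
        (\<integral>\<^sup>+ r. S r * indicator {a..b} r \<partial>lborel) \<le> ennreal c)"

lemma upper_integral_le_const:
  assumes "\<And>r. r \<in> {a..b} \<Longrightarrow> g r \<le> ennreal c" "a \<le> b" "c \<ge> 0"
  shows "upper_integral_le g a b ((b - a) * c)"
  unfolding upper_integral_le_def
proof (intro bexI[of _ "\<lambda>_. ennreal c"] conjI ballI)
  have "(\<integral>\<^sup>+ r. ennreal c * indicator {a..b} r \<partial>lborel) = ennreal c * ennreal (b - a)"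
    using assms by (simp add: nn_integral_cmult_indicator)
  also have "\<dots> = ennreal ((b - a) * c)"
    using assms by (simp add: ennreal_mult[symmetric] mult.commute)
  finally show "(\<integral>\<^sup>+ r. ennreal c * indicator {a..b} r \<partial>lborel) \<le> ennreal ((b - a) * c)"
    by simp
qed (use assms in auto)

lemma upper_integral_le_mono:
  "upper_integral_le g a b c \<Longrightarrow> c \<le> c' \<Longrightarrow> upper_integral_le g a b c'"
  unfolding upper_integral_le_def by (meson ennreal_leI order_trans)

lemma upper_integral_le_concat:
  assumes "upper_integral_le g a s c1" "upper_integral_le g s b c2" "c1 \<ge> 0" "c2 \<ge> 0"
  shows "upper_integral_le g a b (c1 + c2)"
proof -
  obtain S1 where S1: "S1 \<in> borel_measurable lborel" "\<forall>r\<in>{a..s}. g r \<le> S1 r"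
    "(\<integral>\<^sup>+ r. S1 r * indicator {a..s} r \<partial>lborel) \<le> ennreal c1"
    using assms(1) unfolding upper_integral_le_def by blast
  obtain S2 where S2: "S2 \<in> borel_measurable lborel" "\<forall>r\<in>{s..b}. g r \<le> S2 r"
    "(\<integral>\<^sup>+ r. S2 r * indicator {s..b} r \<partial>lborel) \<le> ennreal c2"
    using assms(2) unfolding upper_integral_le_def by blast
  define S where "S r = S1 r * indicator {..s} r + S2 r * indicator {s<..} r" for r
  have "(\<integral>\<^sup>+ r. S r * indicator {a..b} r \<partial>lborel)
      \<le> (\<integral>\<^sup>+ r. S1 r * indicator {a..s} r + S2 r * indicator {s..b} r \<partial>lborel)"
    by (intro nn_integral_mono) (simp add: S_def split: split_indicator)
  also have "\<dots> = (\<integral>\<^sup>+ r. S1 r * indicator {a..s} r \<partial>lborel) + (\<integral>\<^sup>+ r. S2 r * indicator {s..b} r \<partial>lborel)"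
    using S1(1) S2(1) by (intro nn_integral_add) auto
  also have "\<dots> \<le> ennreal (c1 + c2)"
    using add_mono[OF S1(3) S2(3)] assms(3,4) by (simp add: ennreal_plus)
  finally have "(\<integral>\<^sup>+ r. S r * indicator {a..b} r \<partial>lborel) \<le> ennreal (c1 + c2)" .
  moreover have "S \<in> borel_measurable lborel"
    unfolding S_def[abs_def] using S1(1) S2(1) by measurable
  moreover have "\<forall>r\<in>{a..b}. g r \<le> S r"
    using S1(2) S2(2) by (auto simp: S_def not_le split: split_indicator)
  ultimately show ?thesis
    unfolding upper_integral_le_def by (intro bexI[of _ S] conjI)
qed

lemma set_nn_integral_le_of_upper_integral_le:
  assumes "upper_integral_le g a b c"
  shows "(\<integral>\<^sup>+ r \<in> {a..b}. g r \<partial>lborel) \<le> ennreal c"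
proof -
  obtain S where S: "\<forall>r\<in>{a..b}. g r \<le> S r"
    and le: "(\<integral>\<^sup>+ r. S r * indicator {a..b} r \<partial>lborel) \<le> ennreal c"
    using assms unfolding upper_integral_le_def by blast
  have "(\<integral>\<^sup>+ r \<in> {a..b}. g r \<partial>lborel) \<le> (\<integral>\<^sup>+ r. S r * indicator {a..b} r \<partial>lborel)"
    using S by (intro nn_integral_mono) (simp split: split_indicator)
  also note le
  finally show ?thesis .
qed

lemma powr_le_diff_div_of_double:
  fixes x y e :: real
  assumes "x > 0" "2 * x \<le> y" "e < 0"
  shows "x powr e \<le> (x powr e - y powr e) / (1 - 2 powr e)"
proof -
  have "y powr e \<le> (2 * x) powr e" using assms by (intro powr_mono2') auto
  also have "\<dots> = 2 powr e * x powr e" using assms by (simp add: powr_mult)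
  finally have "(1 - 2 powr e) * x powr e \<le> x powr e - y powr e" by (simp add: algebra_simps)
  moreover have "2 powr e < 1" using assms by (simp add: powr_less_one)
  ultimately show ?thesis by (simp add: pos_le_divide_eq mult.commute)
qed

lemma powr_diff_nonneg:
  fixes x y e :: real
  assumes "0 < x" "x \<le> y" "e \<le> 0"
  shows "x powr e - y powr e \<ge> 0"
  using powr_mono2'[OF assms(3) assms(1,2)] by simp

lemma doubling_estimate_solve:
  fixes lam K J J' \<delta> I :: real and m :: nat
  assumes lam: "lam > 1" and m: "m \<ge> 1" and K: "K \<ge> 0" and J: "J > 0" "2 * J \<le> J'" "J' \<le> 4 * J"
    and \<delta>: "\<delta> > 0" and I: "I > 0"
    and est: "J * \<delta> ^ m \<le> K * (J' - J) powr (1 / lam) * I powr ((lam - 1) / lam)"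
  shows "\<delta> * I powr ((1 / lam - 1) / m) \<le> (3 * K + 1) powr (1 / m) * J powr ((1 / lam - 1) / m)"
proof -
  define p where "p = (lam - 1) / lam"
  have p: "0 < p" "1 / lam = 1 - p" using lam by (auto simp: p_def field_simps)
  have "(J' - J) powr (1 / lam) \<le> (3 * J) powr (1 / lam)"
    using J lam by (intro powr_mono2) auto
  also have "\<dots> = 3 powr (1 / lam) * J powr (1 / lam)"
    using J by (simp add: powr_mult)
  also have "\<dots> \<le> 3 * J powr (1 / lam)"
    using lam powr_mono[of "1 / lam" 1 3] by (intro mult_right_mono) auto
  finally have "(J' - J) powr (1 - p) \<le> 3 * J powr (1 - p)"
    unfolding p(2) .
  from mult_left_mono[OF this K] have "K * (J' - J) powr (1 - p) \<le> (3 * K + 1) * J powr (1 - p)"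
    by (rule order_trans) (simp add: distrib_right)
  then have "K * (J' - J) powr (1 / lam) * I powr p \<le> (3 * K + 1) * J powr (1 - p) * I powr p"
    unfolding p(2) by (intro mult_right_mono) auto
  then have "J powr p * J powr (1 - p) * \<delta> ^ m \<le> ((3 * K + 1) * I powr p) * J powr (1 - p)"
    using est J unfolding p_def[symmetric] by (simp add: powr_add[symmetric] mult_ac)
  then have "J powr p * \<delta> ^ m \<le> (3 * K + 1) * I powr p"
    using J by (simp add: mult.commute mult.left_commute)
  then have "(J powr p * \<delta> ^ m) powr (1 / m) \<le> ((3 * K + 1) * I powr p) powr (1 / m)"
    using J \<delta> by (intro powr_mono2) auto
  then have "J powr (p / m) * \<delta> \<le> (3 * K + 1) powr (1 / m) * I powr (p / m)"
    using m J \<delta> I K by (simp add: powr_mult powr_powr powr_realpow[symmetric])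
  moreover have "(1 / lam - 1) / m = - (p / m)" using p by simp
  ultimately show ?thesis
    using J I by (simp add: powr_minus field_simps)
qed

lemma upper_integral_le_by_doubling:
  fixes J :: "real \<Rightarrow> real"
  assumes cont: "continuous_on {r1..r2} J" and e: "e < 0" and L: "L \<ge> 0"
    and step: "\<And>\<rho> \<rho>'. r1 \<le> \<rho> \<Longrightarrow> \<rho> < \<rho>' \<Longrightarrow> \<rho>' \<le> r2 \<Longrightarrow> J \<rho> > 0 \<Longrightarrow>
        2 * J \<rho> \<le> J \<rho>' \<Longrightarrow> J \<rho>' \<le> 4 * J \<rho> \<Longrightarrow>
        upper_integral_le g \<rho> \<rho>' (L * (J \<rho> powr e - J \<rho>' powr e))"
    and r1_r2: "r1 \<le> r2" and J_r1: "J r1 > 0" "2 * J r1 \<le> J r2"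
  shows "upper_integral_le g r1 r2 (L * (J r1 powr e - J r2 powr e))"
proof -
  have "upper_integral_le g \<rho> r2 (L * (J \<rho> powr e - J r2 powr e))"
    if "r1 \<le> \<rho>" "\<rho> \<le> r2" "J \<rho> > 0" "2 * J \<rho> \<le> J r2" "J r2 \<le> 2 ^ k * J \<rho>" for k \<rho>
    using that
  proof (induction k arbitrary: \<rho>)
    case 0
    then show ?case by simp
  next
    case (Suc k)
    show ?case
    proof (cases "J r2 \<le> 4 * J \<rho>")
      case True
      moreover have "\<rho> \<noteq> r2" using Suc.prems by auto
      ultimately show ?thesis using Suc.prems step by simp
    next
      case False
      obtain s where s: "\<rho> \<le> s" "s \<le> r2" "J s = 2 * J \<rho>"
        using IVT'[of J \<rho> "2 * J \<rho>" r2] continuous_on_subset[OF cont] Suc.prems by auto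
      have "\<rho> < s" "s < r2" using s False Suc.prems by (auto simp: order.order_iff_strict)
      then have "upper_integral_le g \<rho> s (L * (J \<rho> powr e - J s powr e))"
        by (intro step) (use s Suc.prems in auto)
      moreover have "upper_integral_le g s r2 (L * (J s powr e - J r2 powr e))"
        using Suc.IH[of s] Suc.prems s False by simp
      ultimately have "upper_integral_le g \<rho> r2 (L * (J \<rho> powr e - J s powr e) + L * (J s powr e - J r2 powr e))"
        using L e s Suc.prems False
        by (intro upper_integral_le_concat mult_nonneg_nonneg powr_diff_nonneg) auto
      then show ?thesis by (simp add: algebra_simps)
    qed
  qed
  moreover obtain k where "J r2 / J r1 < 2 ^ k"
    using real_arch_pow[of 2 "J r2 / J r1"] by auto
  then have "J r2 \<le> 2 ^ k * J r1"
    using J_r1 by (simp add: divide_less_eq less_imp_le)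
  ultimately show ?thesis
    using J_r1 r1_r2 by blast
qed

section \<open>The cutoff estimate for supersolutions\<close>

lemma annulus_subset_annulus:
  assumes "\<sigma> > 1" "0 < r1" "r1 \<le> \<rho>" "\<rho> \<le> r" "r \<le> \<rho>'" "\<rho>' \<le> sqrt \<sigma> * r1"
  shows "ball 0 \<rho>' - ball 0 \<rho> \<subseteq> ball (0::'a::real_normed_vector) (sqrt \<sigma> * r) - ball 0 (r / sqrt \<sigma>)"
proof -
  have "sqrt \<sigma> * r1 \<le> sqrt \<sigma> * r" "sqrt \<sigma> * r1 \<le> sqrt \<sigma> * \<rho>"
    using assms by (simp_all add: mult_left_mono)
  then have "\<rho>' \<le> sqrt \<sigma> * r" "r \<le> sqrt \<sigma> * \<rho>" using assms by linarith+
  moreover have "r / sqrt \<sigma> \<le> \<rho>" using calculation(2) assms by (simp add: divide_le_eq mult.commute)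
  ultimately show ?thesis by auto
qed

lemma hfun_integrand_eq:
  fixes a b :: "real^'n::finite \<Rightarrow> real"
  assumes lam: "lam > 1" and m: "m \<ge> 1" and r: "r > 0"
    and I: "(\<integral>\<^sup>+ x \<in> ball 0 (sqrt \<sigma> * r) - ball 0 (r / sqrt \<sigma>).
              ennreal (a x powr (lam / (lam - 1)) * b x powr (- 1 / (lam - 1))) \<partial>lebesgue) = ennreal I"
      "I \<ge> 0"
  shows "r powr ((1 / lam - 1) * real CARD('n) / real m) * hfun lam \<sigma> a b r powr (1 / (lam * real m))
           = I powr ((1 / lam - 1) / real m)"
proof -
  define e where "e = (1 / lam - 1) / real m"
  define n where "n = real CARD('n)"
  have "hfun lam \<sigma> a b r = (I / r ^ CARD('n)) powr (1 - lam)"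
    using I by (simp add: hfun_def Let_def)
  then have "r powr ((1 / lam - 1) * real CARD('n) / real m) * hfun lam \<sigma> a b r powr (1 / (lam * real m))
      = r powr (e * n) * (I / r ^ CARD('n)) powr e"
    using lam m by (simp add: powr_powr e_def n_def field_simps)
  also have "\<dots> = r powr (e * n) * (I powr e / (r powr n) powr e)"
    using r I by (simp add: powr_divide powr_realpow n_def)
  also have "\<dots> = I powr e"
    using r by (simp add: powr_powr mult.commute)
  finally show ?thesis by (simp add: e_def)
qed

abbreviation h_integrand ::
    "real \<Rightarrow> real \<Rightarrow> nat \<Rightarrow> (real^'n::finite \<Rightarrow> real) \<Rightarrow> (real^'n \<Rightarrow> real) \<Rightarrow> real \<Rightarrow> ennreal" where
  "h_integrand lam \<sigma> m a b r \<equiv>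
     ennreal (r powr ((1 / lam - 1) * real CARD('n) / real m) * hfun lam \<sigma> a b r powr (1 / (lam * real m)))"

text \<open>The constant produced by \<open>doubling_estimate_solve\<close> and
  \<open>powr_le_diff_div_of_double\<close>; the \<open>+ 1\<close> only keeps it positive.\<close>
definition estimate_const :: "'n::finite itself \<Rightarrow> nat \<Rightarrow> real \<Rightarrow> real" where
  "estimate_const _ m lam =
     (3 * real (card (mindices m :: ('n \<Rightarrow> nat) set)) * bump_deriv_const m TYPE('n) + 1) powr (1 / real m)
       / (1 - 2 powr ((1 / lam - 1) / real m))"

lemma estimate_const_pos:
  assumes "m \<ge> 1" "lam > 1"
  shows "estimate_const TYPE('n::finite) m lam > 0"
proof -
  have "2 powr ((1 / lam - 1) / real m) < 1"
    using assms by (simp add: powr_less_one divide_neg_pos)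
  moreover have "3 * real (card (mindices m :: ('n \<Rightarrow> nat) set)) * bump_deriv_const m TYPE('n) + 1 > 0"
    using bump_deriv_const_nonneg[of m, where 'n='n] by (simp add: add_nonneg_pos)
  ultimately show ?thesis
    by (simp add: estimate_const_def)
qed

locale supersolution =
  fixes m :: nat and lam :: real
    and aa :: "('n::finite \<Rightarrow> nat) \<Rightarrow> real^'n \<Rightarrow> real \<Rightarrow> real"
    and a b u :: "real^'n \<Rightarrow> real"
  assumes m_ge_1: "m \<ge> 1" and lam_gt_1: "lam > 1"
    and b_pos: "\<And>x. b x > 0" and b_meas: "b \<in> borel_measurable lebesgue"
    and a_pos: "\<And>x. a x > 0" and a_meas: "a \<in> borel_measurable lebesgue"
    and coeff_bound: "AE x in lebesgue. \<forall>\<zeta> \<alpha>. \<alpha> \<in> mindices m \<longrightarrow> \<bar>aa \<alpha> x \<zeta>\<bar> \<le> a x * \<bar>\<zeta>\<bar>"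
    and solution: "is_solution m lam aa b u"
begin

abbreviation J :: "real \<Rightarrow> real" where
  "J \<equiv> Jfun lam b u"

definition density :: "real^'n \<Rightarrow> real" where
  "density x = b x * \<bar>u x\<bar> powr lam"

definition weight :: "real^'n \<Rightarrow> real" where
  "weight x = a x powr (lam / (lam - 1)) * b x powr (- 1 / (lam - 1))"

lemma density_nonneg: "density x \<ge> 0"
  using b_pos[of x] by (simp add: density_def)

lemma density_integrable_on: "compact K \<Longrightarrow> set_integrable lebesgue K density"
  using solution by (simp add: is_solution_def loc_integrable_def density_def[abs_def])

lemma density_integrable_indicator:
  assumes "S \<subseteq> cball 0 R" "S \<in> sets lebesgue"
  shows "integrable lebesgue (\<lambda>x. indicator S x * density x)"
  using set_integrable_subset[OF density_integrable_on[of "cball 0 R"] assms(2,1)]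
  by (simp add: set_integrable_def)

lemma abs_u_indicator_measurable:
  assumes "S \<subseteq> cball 0 R" "S \<in> sets lebesgue"
  shows "(\<lambda>x. \<bar>u x\<bar> * indicator S x) \<in> borel_measurable lebesgue"
proof -
  have "\<bar>u x\<bar> * indicator S x = (indicator S x * density x / b x) powr (1 / lam)" for x
    using b_pos[of x] lam_gt_1 by (simp add: density_def powr_powr indicator_def)
  then show ?thesis
    using borel_measurable_integrable[OF density_integrable_indicator[OF assms]] b_meas
    by (simp add: measurable_compose[OF _ powr_real_measurable] borel_measurable_divide)
qed

lemma J_eq_integral: "J s = (\<integral>x. indicator (ball 0 s) x * density x \<partial>lebesgue)"
  by (simp add: Jfun_def set_lebesgue_integral_def density_def)

lemma J_diff_eq_integral:
  assumes "\<rho> \<le> \<rho>'"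
  shows "J \<rho>' - J \<rho> = (\<integral>x. indicator (ball 0 \<rho>' - ball 0 \<rho>) x * density x \<partial>lebesgue)"
proof -
  have "(\<lambda>x. indicator (ball 0 \<rho>' - ball 0 \<rho>) x * density x)
      = (\<lambda>x. indicator (ball 0 \<rho>') x * density x - indicator (ball 0 \<rho>) x * density x)"
    using assms by (auto simp: indicator_def fun_eq_iff)
  then show ?thesis
    unfolding J_eq_integral
    using density_integrable_indicator[of "ball 0 \<rho>'" \<rho>'] density_integrable_indicator[of "ball 0 \<rho>" \<rho>]
    by simp
qed

text \<open>Dominated convergence, with the spheres as the only possible discontinuities of
  the integrands: they are null sets.\<close>
lemma continuous_on_J: "continuous_on {s1..s2} J"
proof (rule continuous_on_sequentiallyI)
  fix s :: "nat \<Rightarrow> real" and t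
  assume s: "\<forall>n. s n \<in> {s1..s2}" and lim: "s \<longlonglongrightarrow> t"
  have "AE x in lebesgue. x \<notin> sphere 0 t"
    using negligible_sphere negligible_iff_null_sets AE_not_in by blast
  then have conv: "AE x in lebesgue.
      (\<lambda>n. indicator (ball 0 (s n)) x * density x) \<longlonglongrightarrow> indicator (ball 0 t) x * density x"
  proof eventually_elim
    case (elim x)
    then have "eventually (\<lambda>n. indicator (ball 0 (s n)) x = (indicator (ball 0 t) x :: real)) sequentially"
      using order_tendstoD[OF lim, of "norm x"] by (cases "norm x < t") (auto elim!: eventually_mono)
    then have "eventually (\<lambda>n. indicator (ball 0 t) x * density x
        = indicator (ball 0 (s n)) x * density x) sequentially"
      by eventually_elim simp
    then show ?case
      by (rule Lim_transform_eventually[OF tendsto_const])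
  qed
  have "(\<lambda>n. \<integral>x. indicator (ball 0 (s n)) x * density x \<partial>lebesgue)
      \<longlonglongrightarrow> (\<integral>x. indicator (ball 0 t) x * density x \<partial>lebesgue)"
  proof (rule integral_dominated_convergence[OF _ _ density_integrable_indicator[of "cball 0 s2" s2] conv])
    show "(\<lambda>x. indicator (ball 0 t) x * density x) \<in> borel_measurable lebesgue"
      using density_integrable_indicator[of "ball 0 t" t] by auto
    show "(\<lambda>x. indicator (ball 0 (s n)) x * density x) \<in> borel_measurable lebesgue" for n
      using density_integrable_indicator[of "ball 0 (s n)" "s n"] by auto
    show "AE x in lebesgue. norm (indicator (ball 0 (s n)) x * density x) \<le> indicator (cball 0 s2) x * density x"
      for n using s[rule_format, of n] density_nonneg by (intro AE_I2) (auto simp: indicator_def)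
  qed auto
  then show "(\<lambda>n. J (s n)) \<longlonglongrightarrow> J t"
    unfolding J_eq_integral .
qed

lemma J_le_integral_radial_bump:
  assumes "0 < \<rho>" "\<rho> < \<rho>'"
  shows "J \<rho> \<le> (\<integral>x. density x * radial_bump \<rho> \<rho>' x \<partial>lebesgue)"
  unfolding J_eq_integral
proof (rule integral_mono)
  have supp: "density x * radial_bump \<rho> \<rho>' x = (indicator (cball 0 \<rho>') x * density x) * radial_bump \<rho> \<rho>' x" for x
    using radial_bump_outside[OF assms, of x] by (auto simp: indicator_def)
  have int: "integrable lebesgue (\<lambda>x. indicator (cball 0 \<rho>') x * density x)"
    by (rule density_integrable_indicator) auto
  have "radial_bump \<rho> \<rho>' \<in> borel_measurable lebesgue"
    by (intro measurable_completion) (simp add: borel_measurable_continuous_onI continuous_on_radial_bump)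
  with borel_measurable_integrable[OF int]
  have "(\<lambda>x. indicator (cball 0 \<rho>') x * density x * radial_bump \<rho> \<rho>' x) \<in> borel_measurable lebesgue"
    by (rule borel_measurable_times)
  moreover have "\<bar>indicator (cball 0 \<rho>') x * density x * radial_bump \<rho> \<rho>' x\<bar>
      \<le> \<bar>indicator (cball 0 \<rho>') x * density x\<bar>" for x
    using radial_bump_bounds[of \<rho> \<rho>' x] by (simp add: abs_mult mult_left_le)
  ultimately show "integrable lebesgue (\<lambda>x. density x * radial_bump \<rho> \<rho>' x)"
    unfolding supp by (intro Bochner_Integration.integrable_bound[OF int] AE_I2) simp_all
  show "indicator (ball 0 \<rho>) x * density x \<le> density x * radial_bump \<rho> \<rho>' x" for x
    using radial_bump_inside[OF assms, of x] radial_bump_bounds[of \<rho> \<rho>' x] density_nonneg[of x]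
    by (auto simp: indicator_def)
qed (use density_integrable_indicator[of "ball 0 \<rho>" \<rho>] in auto)

definition deriv_const :: real where
  "deriv_const = real (card (mindices m :: ('n \<Rightarrow> nat) set)) * bump_deriv_const m TYPE('n)"

lemma deriv_const_nonneg: "deriv_const \<ge> 0"
  by (simp add: deriv_const_def bump_deriv_const_nonneg)

lemma coeff_sum_radial_bump_le:
  assumes "0 < \<rho>" "\<rho> < \<rho>'"
  shows "AE x in lebesgue.
    (\<Sum>\<alpha>\<in>mindices m. aa \<alpha> x (u x) * mpartial \<alpha> (radial_bump \<rho> \<rho>') x)
      \<le> deriv_const / (\<rho>' - \<rho>) ^ m * (a x * \<bar>u x\<bar> * indicator (ball 0 \<rho>' - ball 0 \<rho>) x)"
  using coeff_bound
proof eventually_elim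
  case (elim x)
  have "(\<Sum>\<alpha>\<in>mindices m. aa \<alpha> x (u x) * mpartial \<alpha> (radial_bump \<rho> \<rho>') x)
      \<le> (\<Sum>\<alpha>\<in>mindices m. \<bar>aa \<alpha> x (u x)\<bar> * \<bar>mpartial \<alpha> (radial_bump \<rho> \<rho>') x\<bar>)"
    by (intro sum_mono) (simp add: abs_mult[symmetric])
  also have "\<dots> \<le> (\<Sum>\<alpha>\<in>(mindices m :: ('n \<Rightarrow> nat) set). a x * \<bar>u x\<bar>
      * (bump_deriv_const m TYPE('n) / (\<rho>' - \<rho>) ^ m * indicator (ball 0 \<rho>' - ball 0 \<rho>) x))"
  proof (rule sum_mono)
    fix \<alpha> :: "'n \<Rightarrow> nat" assume "\<alpha> \<in> mindices m"
    then show "\<bar>aa \<alpha> x (u x)\<bar> * \<bar>mpartial \<alpha> (radial_bump \<rho> \<rho>') x\<bar>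
        \<le> a x * \<bar>u x\<bar> * (bump_deriv_const m TYPE('n) / (\<rho>' - \<rho>) ^ m * indicator (ball 0 \<rho>' - ball 0 \<rho>) x)"
      using elim abs_mpartial_radial_bump_le[OF assms _ m_ge_1] a_pos[of x]
      by (intro mult_mono) auto
  qed
  finally show ?case
    by (simp add: deriv_const_def mult_ac)
qed

text \<open>Hoelder's inequality with exponents \<open>\<lambda>\<close> and \<open>\<lambda>/(\<lambda> - 1)\<close> for
  \<open>a |u| = (b |u|\<^sup>\<lambda>)\<^sup>1\<^sup>/\<^sup>\<lambda> \<cdot> a b\<^sup>-\<^sup>1\<^sup>/\<^sup>\<lambda>\<close> on the annulus.\<close>
lemma nn_integral_annulus_le:
  assumes "\<rho> \<le> \<rho>'"
    and I: "(\<integral>\<^sup>+ x \<in> ball 0 \<rho>' - ball 0 \<rho>. ennreal (weight x) \<partial>lebesgue) = ennreal I" "I \<ge> 0"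
  shows "(\<integral>\<^sup>+ x. ennreal (a x * \<bar>u x\<bar> * indicator (ball 0 \<rho>' - ball 0 \<rho>) x) \<partial>lebesgue)
           \<le> ennreal ((J \<rho>' - J \<rho>) powr (1 / lam) * I powr ((lam - 1) / lam))"
proof -
  define A where "A = ball (0::real^'n) \<rho>' - ball 0 \<rho>"
  define q where "q = lam / (lam - 1)"
  define f where "f x = (indicator A x * density x) powr (1 / lam)" for x
  define g where "g x = a x * b x powr (- 1 / lam) * indicator A x" for x
  have q: "q > 1" "1 / lam + 1 / q = 1" "1 / q = (lam - 1) / lam"
    using lam_gt_1 by (auto simp: q_def field_simps)
  have fg: "f x * g x = a x * \<bar>u x\<bar> * indicator A x" for x
    using b_pos[of x] lam_gt_1
    by (auto simp: f_def g_def density_def powr_mult powr_powr powr_add[symmetric] indicator_def)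
  have A_int: "integrable lebesgue (\<lambda>x. indicator A x * density x)"
    unfolding A_def by (rule density_integrable_indicator[of _ \<rho>']) auto
  have f_meas: "f \<in> borel_measurable lebesgue"
    unfolding f_def[abs_def] using borel_measurable_integrable[OF A_int] by measurable
  have g_meas: "g \<in> borel_measurable lebesgue"
    unfolding g_def[abs_def] A_def using a_meas b_meas
    by (auto intro!: borel_measurable_times borel_measurable_indicator powr_real_measurable)
  have "(\<integral>\<^sup>+ x. ennreal (f x powr lam) \<partial>lebesgue) = (\<integral>\<^sup>+ x. ennreal (indicator A x * density x) \<partial>lebesgue)"
    using lam_gt_1 density_nonneg by (simp add: f_def powr_powr)
  also have "\<dots> = ennreal (J \<rho>' - J \<rho>)"
    unfolding J_diff_eq_integral[OF assms(1)] A_def[symmetric]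
    by (rule nn_integral_eq_integral[OF A_int]) (simp add: density_nonneg)
  finally have f_norm: "(\<integral>\<^sup>+ x. ennreal (f x powr lam) \<partial>lebesgue) = ennreal (J \<rho>' - J \<rho>)" .
  have "g x powr q = weight x * indicator A x" for x
    using a_pos[of x] b_pos[of x] lam_gt_1
    by (simp add: g_def weight_def q_def powr_mult powr_powr indicator_def)
  then have "(\<integral>\<^sup>+ x. ennreal (g x powr q) \<partial>lebesgue) = (\<integral>\<^sup>+ x \<in> A. ennreal (weight x) \<partial>lebesgue)"
    by (intro nn_integral_cong) (simp split: split_indicator)
  then have g_norm: "(\<integral>\<^sup>+ x. ennreal (g x powr q) \<partial>lebesgue) = ennreal I"
    using I(1) by (simp add: A_def)
  have "J \<rho>' - J \<rho> \<ge> 0"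
    unfolding J_diff_eq_integral[OF assms(1)] by (simp add: density_nonneg)
  moreover have "f x \<ge> 0" "g x \<ge> 0" for x
    using a_pos[of x] by (simp_all add: f_def g_def)
  ultimately show ?thesis
    using nn_integral_mult_le_Holder[OF lam_gt_1 q(1,2) f_meas g_meas _ _ f_norm _ g_norm I(2)]
    by (simp add: fg A_def q(3))
qed

lemma cutoff_estimate:
  assumes "0 < \<rho>" "\<rho> < \<rho>'"
    and I: "(\<integral>\<^sup>+ x \<in> ball 0 \<rho>' - ball 0 \<rho>. ennreal (weight x) \<partial>lebesgue) = ennreal I" "I \<ge> 0"
  shows "J \<rho> * (\<rho>' - \<rho>) ^ m \<le> deriv_const * (J \<rho>' - J \<rho>) powr (1 / lam) * I powr ((lam - 1) / lam)"
proof -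
  define c where "c = deriv_const / (\<rho>' - \<rho>) ^ m"
  define B where "B = (J \<rho>' - J \<rho>) powr (1 / lam) * I powr ((lam - 1) / lam)"
  have c: "c \<ge> 0" using assms deriv_const_nonneg by (simp add: c_def)
  have "J \<rho> \<le> (\<integral>x. density x * radial_bump \<rho> \<rho>' x \<partial>lebesgue)"
    by (rule J_le_integral_radial_bump[OF assms(1,2)])
  also have "\<dots> \<le> (\<integral>x. (\<Sum>\<alpha>\<in>mindices m. aa \<alpha> x (u x) * mpartial \<alpha> (radial_bump \<rho> \<rho>') x) \<partial>lebesgue)"
    using solution test_fun_radial_bump[OF assms(1,2)] radial_bump_bounds
    unfolding is_solution_def density_def by blast
  also have "\<dots> \<le> c * B"
  proof (rule integral_real_bounded)
    have "(\<integral>\<^sup>+ x. ennreal (\<Sum>\<alpha>\<in>mindices m. aa \<alpha> x (u x) * mpartial \<alpha> (radial_bump \<rho> \<rho>') x) \<partial>lebesgue)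
        \<le> (\<integral>\<^sup>+ x. ennreal c * ennreal (a x * \<bar>u x\<bar> * indicator (ball 0 \<rho>' - ball 0 \<rho>) x) \<partial>lebesgue)"
      by (intro nn_integral_mono_AE eventually_mono[OF coeff_sum_radial_bump_le[OF assms(1,2)]])
         (use c in \<open>auto simp: c_def ennreal_mult'[symmetric] intro!: ennreal_leI\<close>)
    also have "\<dots> = ennreal c * (\<integral>\<^sup>+ x. ennreal (a x * \<bar>u x\<bar> * indicator (ball 0 \<rho>' - ball 0 \<rho>) x) \<partial>lebesgue)"
    proof (rule nn_integral_cmult)
      have "(\<lambda>x. \<bar>u x\<bar> * indicator (ball 0 \<rho>' - ball 0 \<rho>) x) \<in> borel_measurable lebesgue"
        by (rule abs_u_indicator_measurable[of _ \<rho>']) auto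
      then show "(\<lambda>x. ennreal (a x * \<bar>u x\<bar> * indicator (ball 0 \<rho>' - ball 0 \<rho>) x)) \<in> borel_measurable lebesgue"
        using a_meas by (simp add: mult.assoc)
    qed
    also have "\<dots> \<le> ennreal c * ennreal B"
      unfolding B_def using nn_integral_annulus_le[OF less_imp_le[OF assms(2)] I] by (rule mult_left_mono) simp
    finally show "(\<integral>\<^sup>+ x. ennreal (\<Sum>\<alpha>\<in>mindices m. aa \<alpha> x (u x) * mpartial \<alpha> (radial_bump \<rho> \<rho>') x) \<partial>lebesgue)
        \<le> ennreal (c * B)"
      using c by (simp add: ennreal_mult')
  qed (use c in \<open>simp add: B_def\<close>)
  finally show ?thesis
    using assms by (simp add: c_def B_def field_simps)
qed

lemma exponent_neg: "(1 / lam - 1) / real m < 0"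
  using m_ge_1 lam_gt_1 by (simp add: divide_neg_pos)

lemma h_integrand_eq_0:
  assumes sub: "A \<subseteq> ball 0 (sqrt \<sigma> * r) - ball 0 (r / sqrt \<sigma>)"
    and "(\<integral>\<^sup>+ x \<in> A. ennreal (weight x) \<partial>lebesgue) = \<infinity>"
  shows "h_integrand lam \<sigma> m a b r = 0"
proof -
  have "\<infinity> \<le> (\<integral>\<^sup>+ x \<in> ball 0 (sqrt \<sigma> * r) - ball 0 (r / sqrt \<sigma>). ennreal (weight x) \<partial>lebesgue)"
    unfolding assms(2)[symmetric] using sub by (intro nn_integral_mono) (auto split: split_indicator)
  then show ?thesis by (simp add: hfun_def weight_def top_unique)
qed

lemma h_integrand_le:
  assumes "r > 0" and sub: "A \<subseteq> ball 0 (sqrt \<sigma> * r) - ball 0 (r / sqrt \<sigma>)"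
    and I: "(\<integral>\<^sup>+ x \<in> A. ennreal (weight x) \<partial>lebesgue) = ennreal I" "I > 0"
  shows "h_integrand lam \<sigma> m a b r \<le> ennreal (I powr ((1 / lam - 1) / real m))"
proof (cases "(\<integral>\<^sup>+ x \<in> ball 0 (sqrt \<sigma> * r) - ball 0 (r / sqrt \<sigma>). ennreal (weight x) \<partial>lebesgue)")
  case (real I')
  have "ennreal I \<le> ennreal I'"
    unfolding I(1)[symmetric] real(2)[symmetric] using sub
    by (intro nn_integral_mono) (auto split: split_indicator)
  then have "I' powr ((1 / lam - 1) / real m) \<le> I powr ((1 / lam - 1) / real m)"
    using real(1) I(2) exponent_neg by (intro powr_mono2') auto
  then show ?thesis
    unfolding hfun_integrand_eq[OF lam_gt_1 m_ge_1 assms(1) real(2)[unfolded weight_def] real(1)]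
    by (rule ennreal_leI)
next
  case top
  then show ?thesis by (simp add: hfun_def weight_def)
qed

lemma upper_integral_le_doubling_step:
  assumes \<sigma>: "\<sigma> > 1" and r: "0 < r1" "r1 \<le> \<rho>" "\<rho> < \<rho>'" "\<rho>' \<le> sqrt \<sigma> * r1"
    and J: "J \<rho> > 0" "2 * J \<rho> \<le> J \<rho>'" "J \<rho>' \<le> 4 * J \<rho>"
  shows "upper_integral_le (h_integrand lam \<sigma> m a b) \<rho> \<rho>'
     (estimate_const TYPE('n::finite) m lam * (J \<rho> powr ((1 / lam - 1) / real m) - J \<rho>' powr ((1 / lam - 1) / real m)))"
    (is "upper_integral_le _ _ _ (?L * ?D)")
proof -
  define A where "A = ball (0::real^'n) \<rho>' - ball 0 \<rho>"
  define e where "e = (1 / lam - 1) / real m"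
  have sub: "A \<subseteq> ball 0 (sqrt \<sigma> * r) - ball 0 (r / sqrt \<sigma>)" if "r \<in> {\<rho>..\<rho>'}" for r
    unfolding A_def using annulus_subset_annulus[OF \<sigma> r(1,2)] that r by auto
  show ?thesis
  proof (cases "\<integral>\<^sup>+ x \<in> A. ennreal (weight x) \<partial>lebesgue")
    case (real I)
    have est: "J \<rho> * (\<rho>' - \<rho>) ^ m \<le> deriv_const * (J \<rho>' - J \<rho>) powr (1 / lam) * I powr ((lam - 1) / lam)"
      using cutoff_estimate[of \<rho> \<rho>' I] r real by (simp add: A_def)
    have "J \<rho> * (\<rho>' - \<rho>) ^ m > 0" using J r by simp
    then have I_pos: "I > 0"
      using est lam_gt_1 real(1) by (cases "I = 0") auto
    have "upper_integral_le (h_integrand lam \<sigma> m a b) \<rho> \<rho>' ((\<rho>' - \<rho>) * I powr e)"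
      using h_integrand_le[OF _ sub real(2) I_pos] r
      by (intro upper_integral_le_const) (auto simp: e_def)
    moreover have "(\<rho>' - \<rho>) * I powr e \<le> (3 * deriv_const + 1) powr (1 / m) * J \<rho> powr e"
      using doubling_estimate_solve[OF lam_gt_1 m_ge_1 deriv_const_nonneg J _ I_pos est] r
      by (simp add: e_def)
    moreover have "(3 * deriv_const + 1) powr (1 / m) * J \<rho> powr e \<le> ?L * ?D"
    proof -
      have "J \<rho> powr e \<le> ?D / (1 - 2 powr e)"
        using powr_le_diff_div_of_double[OF J(1,2) exponent_neg] by (simp add: e_def)
      moreover have "?L * ?D = (3 * deriv_const + 1) powr (1 / m) * (?D / (1 - 2 powr e))"
        by (simp add: estimate_const_def deriv_const_def e_def mult.assoc)
      ultimately show ?thesis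
        using mult_left_mono[of "J \<rho> powr e" "?D / (1 - 2 powr e)" "(3 * deriv_const + 1) powr (1 / m)"]
        by simp
    qed
    ultimately show ?thesis
      by (elim upper_integral_le_mono order_trans) (rule order_refl)
  next
    case top
    then have "upper_integral_le (h_integrand lam \<sigma> m a b) \<rho> \<rho>' ((\<rho>' - \<rho>) * 0)"
      using r h_integrand_eq_0[OF sub] by (intro upper_integral_le_const) auto
    moreover have "?L * ?D \<ge> 0"
      using estimate_const_pos[OF m_ge_1 lam_gt_1, where 'n='n] powr_diff_nonneg[of "J \<rho>" "J \<rho>'"] J
        exponent_neg by simp
    ultimately show ?thesis
      by (auto intro: upper_integral_le_mono)
  qed
qed

lemma set_nn_integral_h_integrand_le:
  assumes "\<sigma> > 1" "0 < r1" "r1 < r2" "r2 \<le> sqrt \<sigma> * r1" "J r1 > 0" "2 * J r1 \<le> J r2"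
  shows "(\<integral>\<^sup>+ r \<in> {r1..r2}. h_integrand lam \<sigma> m a b r \<partial>lborel)
    \<le> ennreal (estimate_const TYPE('n::finite) m lam
                 * (J r1 powr ((1 / lam - 1) / real m) - J r2 powr ((1 / lam - 1) / real m)))"
proof (rule set_nn_integral_le_of_upper_integral_le,
       rule upper_integral_le_by_doubling[OF continuous_on_J exponent_neg])
  show "estimate_const TYPE('n) m lam \<ge> 0"
    using estimate_const_pos[OF m_ge_1 lam_gt_1, where 'n='n] by simp
qed (use assms upper_integral_le_doubling_step in auto)

end

theorem lemma3p2:
  fixes m :: nat and lam \<sigma> :: real
  assumes "m \<ge> 1" and "lam > 1" and "\<sigma> > 1"
  shows "\<exists>C>0. \<forall>(aa :: ('n::finite \<Rightarrow> nat) \<Rightarrow> real^'n \<Rightarrow> real \<Rightarrow> real)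
            (a :: real^'n \<Rightarrow> real) (b :: real^'n \<Rightarrow> real) (u :: real^'n \<Rightarrow> real) r1 r2.
     (\<forall>x. b x > 0) \<and> b \<in> borel_measurable lebesgue \<and>
     (\<forall>x. a x > 0) \<and> a \<in> borel_measurable lebesgue \<and>
     (AE x in lebesgue. \<forall>\<zeta> \<alpha>. \<alpha> \<in> mindices m \<longrightarrow> \<bar>aa \<alpha> x \<zeta>\<bar> \<le> a x * \<bar>\<zeta>\<bar>) \<and>
     is_solution m lam aa b u \<and>
     0 < r1 \<and> r1 < r2 \<and> r2 \<le> sqrt \<sigma> * r1 \<and>
     2 * Jfun lam b u r1 \<le> Jfun lam b u r2 \<and> Jfun lam b u r1 > 0
     \<longrightarrow>
     ennreal C * (\<integral>\<^sup>+ r \<in> {r1..r2}.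
          ennreal (r powr ((1 / lam - 1) * real CARD('n) / real m)
                   * hfun lam \<sigma> a b r powr (1 / (lam * real m))) \<partial>lborel)
       \<le> ennreal (Jfun lam b u r1 powr ((1 / lam - 1) / real m)
                  - Jfun lam b u r2 powr ((1 / lam - 1) / real m))"
proof -
  define L where "L = estimate_const TYPE('n) m lam"
  have L: "L > 0" unfolding L_def using assms(1,2) by (rule estimate_const_pos)
  show ?thesis
    apply (intro exI[of _ "1 / L"] conjI allI impI)
    subgoal using L by simp
    subgoal premises hyps for aa a b u r1 r2
    proof -
      interpret supersolution m lam aa a b u
        using assms hyps by unfold_locales auto
      have "(\<integral>\<^sup>+ r \<in> {r1..r2}. h_integrand lam \<sigma> m a b r \<partial>lborel)
          \<le> ennreal (L * (J r1 powr ((1 / lam - 1) / real m) - J r2 powr ((1 / lam - 1) / real m)))"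
        unfolding L_def using assms(3) hyps by (intro set_nn_integral_h_integrand_le) auto
      then show ?thesis
        using L by (auto dest: mult_left_mono[of _ _ "ennreal (1 / L)"] simp: ennreal_mult'[symmetric])
    qed
    done
qed

end
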